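(* Let $\pi':U^+\to U^+/(z')$ be the canonical map. The center of $U^+/(z')$ is the polynomial algebra $\Bbbk[\pi'(z)]$ in one variable.
   Context: $\Bbbk$ is an algebraically closed field of characteristic zero and $q\in\Bbbk^\times$ is not a root of unity. $U^+$ is the $\Bbbk$-algebra generated by $e_1,e_2$ with relations (S1) $e_1^2e_2-(q^2+q^{-2})e_1e_2e_1+e_2e_1^2=0$ and (S2) $e_2^3e_1-(q^2+1+q^{-2})e_2^2e_1e_2+(q^2+1+q^{-2})e_2e_1e_2^2-e_1e_2^3=0$. Set $e_3=e_1e_2-q^2e_2e_1$, $z=e_2e_3-q^2e_3e_2$, $w=e_2e_3-e_3e_2$, $z'=e_1w-q^{-4}we_1$; $(z')$ is the two-sided ideal generated by $z'$. *)

theory Defs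
  imports "HOL-Computational_Algebra.Polynomial"
begin

text \<open>Free associative algebra on two generators over a field, realised as
  finitely supported coefficient functions on words over the alphabet {G1,G2}.\<close>

datatype gen = G1 | G2

type_synonym 'k nc = "gen list \<Rightarrow> 'k"

definition nc_carrier :: "('k::field) nc set" where
  "nc_carrier = {f. finite {w. f w \<noteq> 0}}"

definition nc_zero :: "('k::field) nc" where "nc_zero = (\<lambda>w. 0)"
definition nc_one :: "('k::field) nc" where "nc_one = (\<lambda>w. if w = [] then 1 else 0)"
definition nc_add :: "('k::field) nc \<Rightarrow> 'k nc \<Rightarrow> 'k nc" (infixl "\<oplus>" 65)
  where "f \<oplus> g = (\<lambda>w. f w + g w)"
definition nc_sub :: "('k::field) nc \<Rightarrow> 'k nc \<Rightarrow> 'k nc" (infixl "\<ominus>" 65)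
  where "f \<ominus> g = (\<lambda>w. f w - g w)"
definition nc_smul :: "'k::field \<Rightarrow> 'k nc \<Rightarrow> 'k nc" (infixr "\<cdot>" 75)
  where "c \<cdot> f = (\<lambda>w. c * f w)"
definition nc_mul :: "('k::field) nc \<Rightarrow> 'k nc \<Rightarrow> 'k nc" (infixl "\<otimes>" 70)
  where "f \<otimes> g = (\<lambda>w. \<Sum>i\<le>length w. f (take i w) * g (drop i w))"

primrec nc_pow :: "('k::field) nc \<Rightarrow> nat \<Rightarrow> 'k nc" where
  "nc_pow f 0 = nc_one"
| "nc_pow f (Suc n) = nc_pow f n \<otimes> f"

definition gen_elt :: "gen \<Rightarrow> ('k::field) nc" where
  "gen_elt g = (\<lambda>w. if w = [g] then 1 else 0)"

definition nc_peval :: "('k::field) poly \<Rightarrow> 'k nc \<Rightarrow> 'k nc" where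
  "nc_peval p x = (\<lambda>w. \<Sum>i\<le>degree p. coeff p i * nc_pow x i w)"

inductive_set nc_ideal :: "('k::field) nc set \<Rightarrow> 'k nc set" for S where
  zero: "nc_zero \<in> nc_ideal S"
| gen: "s \<in> S \<Longrightarrow> a \<in> nc_carrier \<Longrightarrow> b \<in> nc_carrier \<Longrightarrow> a \<otimes> s \<otimes> b \<in> nc_ideal S"
| add: "x \<in> nc_ideal S \<Longrightarrow> y \<in> nc_ideal S \<Longrightarrow> x \<oplus> y \<in> nc_ideal S"

definition e1 :: "('k::field) nc" where "e1 = gen_elt G1"
definition e2 :: "('k::field) nc" where "e2 = gen_elt G2"

definition S1 :: "'k::field \<Rightarrow> 'k nc" where
  "S1 q = (e1 \<otimes> e1 \<otimes> e2) \<ominus> ((q^2 + inverse q ^ 2) \<cdot> (e1 \<otimes> e2 \<otimes> e1)) \<oplus> (e2 \<otimes> e1 \<otimes> e1)"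

definition S2 :: "'k::field \<Rightarrow> 'k nc" where
  "S2 q = (e2 \<otimes> e2 \<otimes> e2 \<otimes> e1)
          \<ominus> ((q^2 + 1 + inverse q ^ 2) \<cdot> (e2 \<otimes> e2 \<otimes> e1 \<otimes> e2))
          \<oplus> ((q^2 + 1 + inverse q ^ 2) \<cdot> (e2 \<otimes> e1 \<otimes> e2 \<otimes> e2))
          \<ominus> (e1 \<otimes> e2 \<otimes> e2 \<otimes> e2)"

definition e3 :: "'k::field \<Rightarrow> 'k nc" where
  "e3 q = (e1 \<otimes> e2) \<ominus> (q^2 \<cdot> (e2 \<otimes> e1))"

definition zz :: "'k::field \<Rightarrow> 'k nc" where
  "zz q = (e2 \<otimes> e3 q) \<ominus> (q^2 \<cdot> (e3 q \<otimes> e2))"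

definition ww :: "'k::field \<Rightarrow> 'k nc" where
  "ww q = (e2 \<otimes> e3 q) \<ominus> (e3 q \<otimes> e2)"

definition zprime :: "'k::field \<Rightarrow> 'k nc" where
  "zprime q = (e1 \<otimes> ww q) \<ominus> (inverse q ^ 4 \<cdot> (ww q \<otimes> e1))"

text \<open>U^+/(z') = free algebra modulo the ideal generated by (S1), (S2) and z'.\<close>
definition Iq :: "'k::field \<Rightarrow> 'k nc set" where
  "Iq q = nc_ideal {S1 q, S2 q, zprime q}"

end

(*
  Modulo (S1), (S2) and z' the elements e3 and w = e2 e3 - e3 e2 obey the q-commutation rules
  w e2 = q^-2 e2 w, e1 e3 = q^-2 e3 e1, e1 w = q^-4 w e1, e3 w = q^-2 w e3 and, as q^2 <> 1,
  e3^2 = -(1 + q^-2) w e1.  Hence the ordered monomials e2^a w^m e3^eps e1^c (eps in {0,1})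
  span U^+/(z').

  To see that they form a basis, let the free algebra act on functions N^3 -> k: e1 shifts the
  first index and e2 shifts the third and, with q-power weights, also the second.  The relations
  act by zero, and on delta_0 the ordered monomials give vectors with pairwise distinct leading
  points (m + eps + c, a, 2m + eps + a).  So x |-> x delta_0 is injective on the quotient.
  Right multiplication by e1 and e2 is realised on these vectors by shift operators commuting
  with the action; since q is not a root of unity, comparing weights shows that the vector of a
  central element is supported on the points (n, n, 2n), where z^n delta_0 lives.  Conversely
  z commutes with e1 and e2 modulo the Serre relations.
*)

theory Submission
  imports Defs
begin

section \<open>The free algebra as a ring\<close>

lemma nc_mul_assoc: "(f \<otimes> g) \<otimes> h = f \<otimes> (g \<otimes> h)"
proof
  fix w :: "gen list"
  define n where "n = length w"
  define F where "F = (\<lambda>j l. f (take j w) * g (take l (drop j w)) * h (drop (j+l) w))"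
  have lhs: "((f \<otimes> g) \<otimes> h) w = (\<Sum>k\<le>n. \<Sum>j\<le>k. F j (k - j))"
    unfolding nc_mul_def n_def F_def
    by (auto simp: sum_distrib_right min_def take_drop intro!: sum.cong)
  have rhs: "(f \<otimes> (g \<otimes> h)) w = (\<Sum>j\<le>n. \<Sum>l\<le>n - j. F j l)"
    unfolding nc_mul_def n_def F_def
    by (auto simp: sum_distrib_left mult.assoc add.commute intro!: sum.cong)
  have "{(j,l). j+l \<le> n} = Sigma {..n} (\<lambda>j. {..n-j})" by auto
  then have "(\<Sum>j\<le>n. \<Sum>l\<le>n - j. F j l) = (\<Sum>(j,l)\<in>{(j,l). j+l \<le> n}. F j l)"
    by (simp add: sum.Sigma)
  also have "\<dots> = (\<Sum>k\<le>n. \<Sum>j\<le>k. F j (k - j))"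
    by (rule sum.triangle_reindex_eq)
  finally show "((f \<otimes> g) \<otimes> h) w = (f \<otimes> (g \<otimes> h)) w" using lhs rhs by simp
qed

lemma nc_mul_distrib_left: "f \<otimes> (g \<oplus> h) = (f \<otimes> g) \<oplus> (f \<otimes> h)"
  by (auto simp: nc_mul_def nc_add_def distrib_left sum.distrib)

lemma nc_mul_distrib_right: "(f \<oplus> g) \<otimes> h = (f \<otimes> h) \<oplus> (g \<otimes> h)"
  by (auto simp: nc_mul_def nc_add_def distrib_right sum.distrib)

lemma nc_one_mul: "nc_one \<otimes> f = f"
proof
  fix w :: "gen list"
  have "(nc_one \<otimes> f) w = (\<Sum>i\<le>length w. if i = 0 then f w else 0)"
    unfolding nc_mul_def nc_one_def by (rule sum.cong) auto
  then show "(nc_one \<otimes> f) w = f w" by simp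
qed

lemma nc_mul_one: "f \<otimes> nc_one = f"
proof
  fix w :: "gen list"
  have "(f \<otimes> nc_one) w = (\<Sum>i\<le>length w. if i = length w then f w else 0)"
    unfolding nc_mul_def nc_one_def by (rule sum.cong) auto
  then show "(f \<otimes> nc_one) w = f w" by simp
qed

lemma nc_mul_zero: "f \<otimes> nc_zero = nc_zero" "nc_zero \<otimes> f = nc_zero"
  by (auto simp: nc_mul_def nc_zero_def)

lemma nc_carrier_mul:
  assumes "f \<in> nc_carrier" "g \<in> nc_carrier"
  shows "f \<otimes> g \<in> nc_carrier"
proof -
  let ?F = "{w. f w \<noteq> 0}" and ?G = "{w. g w \<noteq> 0}"
  have "{w. (f \<otimes> g) w \<noteq> 0} \<subseteq> (\<lambda>(u,v). u @ v) ` (?F \<times> ?G)"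
  proof
    fix w assume "w \<in> {w. (f \<otimes> g) w \<noteq> 0}"
    then obtain i where "f (take i w) * g (drop i w) \<noteq> 0"
      unfolding nc_mul_def by (auto elim: sum.not_neutral_contains_not_neutral)
    then show "w \<in> (\<lambda>(u,v). u @ v) ` (?F \<times> ?G)"
      by (auto intro!: image_eqI[of _ _ "(take i w, drop i w)"])
  qed
  moreover have "finite ((\<lambda>(u,v). u @ v) ` (?F \<times> ?G))"
    using assms by (auto simp: nc_carrier_def)
  ultimately show ?thesis unfolding nc_carrier_def by (auto intro: finite_subset)
qed

lemma nc_carrier_pointwise:
  assumes "f \<in> nc_carrier" "g \<in> nc_carrier" "\<And>w. f w = 0 \<Longrightarrow> g w = 0 \<Longrightarrow> h w = 0"
  shows "h \<in> nc_carrier"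
proof -
  have "{w. h w \<noteq> 0} \<subseteq> {w. f w \<noteq> 0} \<union> {w. g w \<noteq> 0}"
    using assms(3) by blast
  then show ?thesis using assms(1,2) unfolding nc_carrier_def by (auto intro: finite_subset)
qed

lemma nc_carrier_zero: "nc_zero \<in> nc_carrier"
  and nc_carrier_one: "nc_one \<in> nc_carrier"
  and nc_carrier_word: "(\<lambda>w. if w = u then (1::'k::field) else 0) \<in> nc_carrier"
  by (auto simp: nc_carrier_def nc_zero_def nc_one_def)

lemma nc_carrier_add: "f \<in> nc_carrier \<Longrightarrow> g \<in> nc_carrier \<Longrightarrow> f \<oplus> g \<in> nc_carrier"
  and nc_carrier_sub: "f \<in> nc_carrier \<Longrightarrow> g \<in> nc_carrier \<Longrightarrow> f \<ominus> g \<in> nc_carrier"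
  by (erule nc_carrier_pointwise; auto simp: nc_add_def nc_sub_def)+

lemma nc_carrier_uminus: "f \<in> nc_carrier \<Longrightarrow> (\<lambda>w. - f w) \<in> nc_carrier"
  and nc_carrier_smul: "f \<in> nc_carrier \<Longrightarrow> c \<cdot> f \<in> nc_carrier"
  by (rule nc_carrier_pointwise[of f f]; auto simp: nc_smul_def)+

typedef (overloaded) ('k::field) free_alg = "nc_carrier :: 'k nc set"
  morphisms word_coeff Abs_free_alg
  using nc_carrier_zero by blast

setup_lifting type_definition_free_alg

instantiation free_alg :: (field) ring_1
begin
lift_definition zero_free_alg :: "'a free_alg" is nc_zero by (rule nc_carrier_zero)
lift_definition one_free_alg :: "'a free_alg" is nc_one by (rule nc_carrier_one)
lift_definition plus_free_alg :: "'a free_alg \<Rightarrow> 'a free_alg \<Rightarrow> 'a free_alg" is nc_add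
  by (rule nc_carrier_add)
lift_definition minus_free_alg :: "'a free_alg \<Rightarrow> 'a free_alg \<Rightarrow> 'a free_alg" is nc_sub
  by (rule nc_carrier_sub)
lift_definition uminus_free_alg :: "'a free_alg \<Rightarrow> 'a free_alg" is "\<lambda>f w. - f w"
  by (rule nc_carrier_uminus)
lift_definition times_free_alg :: "'a free_alg \<Rightarrow> 'a free_alg \<Rightarrow> 'a free_alg" is nc_mul
  by (rule nc_carrier_mul)
instance
proof
  fix a b c :: "'a free_alg"
  show "a * b * c = a * (b * c)" by transfer (rule nc_mul_assoc)
  show "(a + b) * c = a * c + b * c" by transfer (rule nc_mul_distrib_right)
  show "a * (b + c) = a * b + a * c" by transfer (rule nc_mul_distrib_left)
  show "1 * a = a" by transfer (rule nc_one_mul)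
  show "a * 1 = a" by transfer (rule nc_mul_one)
  show "a + b + c = a + (b + c)" by transfer (auto simp: nc_add_def add.assoc)
  show "a + b = b + a" by transfer (auto simp: nc_add_def add.commute)
  show "0 + a = a" by transfer (auto simp: nc_add_def nc_zero_def)
  show "- a + a = 0" by transfer (auto simp: nc_add_def nc_zero_def)
  show "a - b = a + - b" by transfer (auto simp: nc_add_def nc_sub_def)
  show "(0::'a free_alg) \<noteq> 1" by transfer (auto simp: nc_zero_def nc_one_def fun_eq_iff)
qed
end

lift_definition alg_smult :: "'k::field \<Rightarrow> 'k free_alg \<Rightarrow> 'k free_alg" is nc_smul
  by (rule nc_carrier_smul)

lift_definition alg_word :: "gen list \<Rightarrow> 'k::field free_alg" is "\<lambda>u w. if w = u then 1 else 0"
  by (rule nc_carrier_word)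

lemma free_alg_eq_iff: "x = y \<longleftrightarrow> (\<forall>w. word_coeff x w = word_coeff y w)"
  by (metis word_coeff_inject ext)

lemma word_coeff_simps [simp]:
  "word_coeff (x + y) w = word_coeff x w + word_coeff y w"
  "word_coeff (x - y) w = word_coeff x w - word_coeff y w"
  "word_coeff (- x) w = - word_coeff x w"
  "word_coeff 0 w = 0"
  "word_coeff (alg_smult c x) w = c * word_coeff x w"
  "word_coeff (alg_word u) w = (if w = u then 1 else 0)"
  by (transfer; simp add: nc_add_def nc_sub_def nc_zero_def nc_smul_def)+

lemma word_coeff_ops:
  "word_coeff (x + y) = word_coeff x \<oplus> word_coeff y"
  "word_coeff (x - y) = word_coeff x \<ominus> word_coeff y"
  "word_coeff (x * y) = word_coeff x \<otimes> word_coeff y"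
  "word_coeff (alg_smult c x) = c \<cdot> word_coeff x"
  "word_coeff (0::'k::field free_alg) = nc_zero"
  "word_coeff (1::'k::field free_alg) = nc_one"
  by (transfer, simp)+

lemma word_coeff_power: "word_coeff (x ^ n) = nc_pow (word_coeff x) n"
  by (induction n) (simp_all add: word_coeff_ops power_commutes[symmetric, of x])

lemma word_coeff_sum: "finite S \<Longrightarrow> word_coeff (sum f S) w = (\<Sum>u\<in>S. word_coeff (f u) w)"
  by (induction S rule: finite_induct) auto

lemma alg_smult_simps [simp]:
  "alg_smult c x * y = alg_smult c (x * y)"
  "x * alg_smult c y = alg_smult c (x * y)"
  "alg_smult c (alg_smult d x) = alg_smult (c * d) x"
  "alg_smult 1 x = x"
  "alg_smult 0 x = 0"
  "alg_smult c 0 = 0"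
  by (transfer; auto simp: nc_smul_def nc_mul_def nc_zero_def sum_distrib_left mult_ac)+

lemma alg_smult_add: "alg_smult c (x + y) = alg_smult c x + alg_smult c y"
  and alg_smult_diff: "alg_smult c (x - y) = alg_smult c x - alg_smult c y"
  and alg_smult_add_left: "alg_smult (c + d) x = alg_smult c x + alg_smult d x"
  and alg_smult_minus_left: "alg_smult (- c) x = - alg_smult c x"
  by (simp_all add: free_alg_eq_iff algebra_simps)

lemma alg_smult_sum: "alg_smult c (sum f S) = (\<Sum>u\<in>S. alg_smult c (f u))"
  by (induction S rule: infinite_finite_induct) (auto simp: alg_smult_add)

lemma alg_word_mult [simp]: "alg_word u * alg_word v = alg_word (u @ v)"
proof (transfer)
  fix u v :: "gen list"
  show "(\<lambda>w. if w = u then 1 else 0) \<otimes> (\<lambda>w. if w = v then 1 else 0) =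
        (\<lambda>w. if w = u @ v then (1::'a) else 0)"
  proof
    fix w :: "gen list"
    have "((\<lambda>w. if w = u then 1 else 0) \<otimes> (\<lambda>w. if w = v then 1 else 0)) w =
          (\<Sum>i\<le>length w. if i = length u \<and> w = u @ v then (1::'a) else 0)"
      unfolding nc_mul_def by (rule sum.cong) (auto simp: append_eq_conv_conj)
    also have "\<dots> = (if w = u @ v then 1 else 0)"
      by (auto simp: sum.delta')
    finally show "((\<lambda>w. if w = u then 1 else 0) \<otimes> (\<lambda>w. if w = v then 1 else 0)) w =
       (if w = u @ v then (1::'a) else 0)" .
  qed
qed

lemma alg_word_Nil: "alg_word [] = 1"
  by transfer (auto simp: nc_one_def)

definition alg_supp :: "'k::field free_alg \<Rightarrow> gen list set" where
  "alg_supp x = {w. word_coeff x w \<noteq> 0}"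

lemma finite_alg_supp: "finite (alg_supp x)"
  using word_coeff[of x] by (simp add: alg_supp_def nc_carrier_def)

lemma alg_word_expansion: "x = (\<Sum>u\<in>alg_supp x. alg_smult (word_coeff x u) (alg_word u))"
proof -
  have "word_coeff x w = (\<Sum>u\<in>alg_supp x. if w = u then word_coeff x w else 0)" for w
    using finite_alg_supp[of x] by (auto simp: alg_supp_def sum.delta sum.delta')
  moreover have "(\<Sum>u\<in>alg_supp x. word_coeff x u * (if w = u then 1 else 0))
      = (\<Sum>u\<in>alg_supp x. if w = u then word_coeff x w else 0)" for w
    by (rule sum.cong) auto
  ultimately show ?thesis
    by (simp add: free_alg_eq_iff word_coeff_sum finite_alg_supp)
qed

lemma alg_word_induct [case_names smult_word add zero]:
  assumes "\<And>c u. P (alg_smult c (alg_word u))" "\<And>x y. P x \<Longrightarrow> P y \<Longrightarrow> P (x + y)"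
    and "P 0"
  shows "P x"
proof -
  have "P (\<Sum>u\<in>S. alg_smult (word_coeff x u) (alg_word u))" if "finite S" for S
    using that by (induction S rule: finite_induct) (simp_all add: assms)
  then show ?thesis
    using alg_word_expansion[of x] finite_alg_supp[of x] by metis
qed

section \<open>Generators and relations\<close>

definition E1 :: "'k::field free_alg" where "E1 = alg_word [G1]"
definition E2 :: "'k::field free_alg" where "E2 = alg_word [G2]"
definition E3 :: "'k::field \<Rightarrow> 'k free_alg" where "E3 q = E1 * E2 - alg_smult (q^2) (E2 * E1)"
definition Z :: "'k::field \<Rightarrow> 'k free_alg" where "Z q = E2 * E3 q - alg_smult (q^2) (E3 q * E2)"
definition W :: "'k::field \<Rightarrow> 'k free_alg" where "W q = E2 * E3 q - E3 q * E2"
definition Zprime :: "'k::field \<Rightarrow> 'k free_alg" where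
  "Zprime q = E1 * W q - alg_smult (inverse q ^ 4) (W q * E1)"
definition Serre1 :: "'k::field \<Rightarrow> 'k free_alg" where
  "Serre1 q = E1 * E1 * E2 - alg_smult (q^2 + inverse q ^ 2) (E1 * E2 * E1) + E2 * E1 * E1"
definition Serre2 :: "'k::field \<Rightarrow> 'k free_alg" where
  "Serre2 q = E2 * E2 * E2 * E1 - alg_smult (q^2 + 1 + inverse q ^ 2) (E2 * E2 * E1 * E2)
     + alg_smult (q^2 + 1 + inverse q ^ 2) (E2 * E1 * E2 * E2) - E1 * E2 * E2 * E2"

lemmas generator_defs = E1_def E2_def E3_def Z_def W_def Zprime_def Serre1_def Serre2_def

lemma word_coeff_E1: "word_coeff E1 = e1"
  and word_coeff_E2: "word_coeff E2 = e2"
  by (simp_all add: E1_def E2_def e1_def e2_def gen_elt_def alg_word.rep_eq)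

lemma word_coeff_generators:
  "word_coeff (Z q) = zz q"
  "word_coeff (Zprime q) = zprime q"
  "word_coeff (Serre1 q) = S1 q"
  "word_coeff (Serre2 q) = S2 q"
  by (simp_all add: E3_def Z_def W_def Zprime_def Serre1_def Serre2_def
      zz_def ww_def e3_def zprime_def S1_def S2_def word_coeff_ops word_coeff_E1 word_coeff_E2)

lemma Serre1_eq: "(q::'k::field) \<noteq> 0 \<Longrightarrow>
    Serre1 q = E1 * E3 q - alg_smult (inverse q ^ 2) (E3 q * E1)"
  and Serre2_eq: "(q::'k::field) \<noteq> 0 \<Longrightarrow>
    Serre2 q = W q * E2 - alg_smult (inverse q ^ 2) (E2 * W q)"
  and E3_square_identity: "(q::'k::field) \<noteq> 0 \<Longrightarrow>
    alg_smult (1 - inverse q ^ 2) (E3 q * E3 q + alg_smult (1 + inverse q ^ 2) (W q * E1))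
      = Zprime q - alg_smult (q^2) (E2 * Serre1 q) + Serre1 q * E2"
  and E3_W_identity: "(q::'k::field) \<noteq> 0 \<Longrightarrow>
    E3 q * W q - alg_smult (inverse q ^ 2) (W q * E3 q)
      = alg_smult (q^2) (Zprime q * E2) - alg_smult (q^2) (E1 * Serre2 q)
        - alg_smult (q^2) (E2 * Zprime q) + Serre2 q * E1"
  and Z_E1_commutator: "(q::'k::field) \<noteq> 0 \<Longrightarrow>
    Z q * E1 - E1 * Z q = alg_smult (q^2) (Serre1 q * E2 - E2 * Serre1 q)"
  and Z_E2_commutator: "(q::'k::field) \<noteq> 0 \<Longrightarrow>
    Z q * E2 - E2 * Z q = alg_smult (q^2) (Serre2 q)"
  unfolding generator_defs
  by (simp_all add: algebra_simps alg_smult_add alg_smult_diff)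
     (auto simp: free_alg_eq_iff field_simps)

section \<open>The ideal of relations\<close>

lemma nc_ideal_mult_closed:
  assumes "x \<in> nc_ideal S" "a \<in> nc_carrier" "b \<in> nc_carrier"
  shows "a \<otimes> x \<otimes> b \<in> nc_ideal S"
  using assms
proof (induction arbitrary: a b rule: nc_ideal.induct)
  case zero
  then show ?case by (simp add: nc_mul_zero nc_ideal.zero)
next
  case (gen s a' b')
  have "a \<otimes> (a' \<otimes> s \<otimes> b') \<otimes> b = (a \<otimes> a') \<otimes> s \<otimes> (b' \<otimes> b)"
    by (simp add: nc_mul_assoc)
  then show ?case using gen by (auto intro!: nc_ideal.gen nc_carrier_mul)
next
  case (add x y)
  then show ?case by (simp add: nc_mul_distrib_left nc_mul_distrib_right nc_ideal.add)
qed

definition J :: "'k::field \<Rightarrow> 'k free_alg set" where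
  "J q = {x. word_coeff x \<in> Iq q}"

lemma J_zero: "0 \<in> J q"
  and J_add: "x \<in> J q \<Longrightarrow> y \<in> J q \<Longrightarrow> x + y \<in> J q"
  and J_mult: "x \<in> J q \<Longrightarrow> a * x * b \<in> J q"
  by (simp_all add: J_def Iq_def word_coeff_ops nc_ideal.zero nc_ideal.add
      nc_ideal_mult_closed word_coeff)

lemma J_mult_left: "x \<in> J q \<Longrightarrow> a * x \<in> J q"
  using J_mult[of x q a 1] by simp

lemma J_mult_right: "x \<in> J q \<Longrightarrow> x * b \<in> J q"
  using J_mult[of x q 1 b] by simp

lemma J_smult: "x \<in> J q \<Longrightarrow> alg_smult c x \<in> J q"
  using J_mult_left[of x q "alg_smult c 1"] by simp

lemma J_uminus: "x \<in> J q \<Longrightarrow> - x \<in> J q"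
  using J_smult[of x q "-1"] by (simp add: alg_smult_minus_left)

lemma J_diff: "x \<in> J q \<Longrightarrow> y \<in> J q \<Longrightarrow> x - y \<in> J q"
  using J_add[of x q "- y"] J_uminus[of y q] by simp

lemma J_smult_cancel: "alg_smult c x \<in> J q \<Longrightarrow> c \<noteq> 0 \<Longrightarrow> x \<in> J q"
  using J_smult[of "alg_smult c x" q "inverse c"] by simp

lemma Serre1_in_J: "Serre1 q \<in> J q"
  and Serre2_in_J: "Serre2 q \<in> J q"
  and Zprime_in_J: "Zprime q \<in> J q"
  using nc_ideal.gen[of _ "{S1 q, S2 q, zprime q}" nc_one nc_one]
  by (simp_all add: J_def Iq_def word_coeff_generators nc_one_mul nc_mul_one nc_carrier_one
      flip: word_coeff_generators)

definition congJ :: "'k::field \<Rightarrow> 'k free_alg \<Rightarrow> 'k free_alg \<Rightarrow> bool" where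
  "congJ q x y \<longleftrightarrow> x - y \<in> J q"

lemma congJ_refl [simp]: "congJ q x x"
  by (simp add: congJ_def J_zero)

lemma congJ_trans [trans]: "congJ q x y \<Longrightarrow> congJ q y z \<Longrightarrow> congJ q x z"
  unfolding congJ_def using J_add by fastforce

lemma congJ_add: "congJ q x y \<Longrightarrow> congJ q x' y' \<Longrightarrow> congJ q (x + x') (y + y')"
  unfolding congJ_def using J_add by (fastforce simp: algebra_simps)

lemma congJ_mult_left: "congJ q x y \<Longrightarrow> congJ q (a * x) (a * y)"
  unfolding congJ_def using J_mult_left by (fastforce simp: algebra_simps)

lemma congJ_mult_right: "congJ q x y \<Longrightarrow> congJ q (x * b) (y * b)"
  unfolding congJ_def using J_mult_right by (fastforce simp: algebra_simps)

lemma congJ_mult_both: "congJ q x y \<Longrightarrow> congJ q (a * x * b) (a * y * b)"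
  by (intro congJ_mult_left congJ_mult_right)

lemma congJ_smult: "congJ q x y \<Longrightarrow> congJ q (alg_smult c x) (alg_smult c y)"
  unfolding congJ_def using J_smult by (fastforce simp: alg_smult_diff)

lemma congJ_power_commute:
  assumes "congJ q (X * Y) (alg_smult d (Y * X))"
  shows "congJ q (X * Y ^ m) (alg_smult (d ^ m) (Y ^ m * X))"
proof (induction m)
  case 0 then show ?case by simp
next
  case (Suc m)
  have "X * Y ^ Suc m = (X * Y ^ m) * Y" by (simp add: mult.assoc power_commutes)
  also have "congJ q \<dots> (alg_smult (d ^ m) (Y ^ m * X) * Y)"
    by (rule congJ_mult_right[OF Suc.IH])
  also have "\<dots> = alg_smult (d ^ m) (Y ^ m * (X * Y))" by (simp add: mult.assoc)
  also have "congJ q \<dots> (alg_smult (d ^ m) (Y ^ m * alg_smult d (Y * X)))"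
    by (intro congJ_smult congJ_mult_left assms)
  also have "\<dots> = alg_smult (d ^ Suc m) (Y ^ Suc m * X)"
    by (simp del: power_Suc add: power_Suc2 mult.assoc)
  finally show ?case .
qed

lemma E1_E2_reorder: "E1 * E2 = E3 q + alg_smult (q^2) (E2 * E1)"
  by (simp add: E3_def)

lemma E3_E2_reorder: "E3 q * E2 = E2 * E3 q - W q"
  by (simp add: W_def)

lemma W_E2_commute: "(q::'k::field) \<noteq> 0 \<Longrightarrow>
    congJ q (W q * E2) (alg_smult (inverse q ^ 2) (E2 * W q))"
  using Serre2_in_J[of q] by (simp add: Serre2_eq congJ_def)

lemma E1_E3_commute: "(q::'k::field) \<noteq> 0 \<Longrightarrow>
    congJ q (E1 * E3 q) (alg_smult (inverse q ^ 2) (E3 q * E1))"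
  using Serre1_in_J[of q] by (simp add: Serre1_eq congJ_def)

lemma E1_W_commute: "congJ q (E1 * W q) (alg_smult (inverse q ^ 4) (W q * E1))"
  using Zprime_in_J[of q] by (simp add: Zprime_def congJ_def)

lemma E3_W_commute: "(q::'k::field) \<noteq> 0 \<Longrightarrow>
    congJ q (E3 q * W q) (alg_smult (inverse q ^ 2) (W q * E3 q))"
  using E3_W_identity[of q]
  by (simp add: congJ_def J_add J_diff J_smult J_mult_left J_mult_right Serre2_in_J Zprime_in_J)

lemma E3_square:
  assumes q: "(q::'k::field) \<noteq> 0" "q^2 \<noteq> 1"
  shows "congJ q (E3 q * E3 q) (- alg_smult (1 + inverse q ^ 2) (W q * E1))"
proof -
  have "Zprime q - alg_smult (q^2) (E2 * Serre1 q) + Serre1 q * E2 \<in> J q"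
    by (intro J_add J_diff J_smult J_mult_left J_mult_right Serre1_in_J Zprime_in_J)
  then have "alg_smult (1 - inverse q ^ 2)
      (E3 q * E3 q + alg_smult (1 + inverse q ^ 2) (W q * E1)) \<in> J q"
    using E3_square_identity[OF q(1)] by simp
  moreover have "1 - inverse q ^ 2 \<noteq> 0"
    using q by (auto simp: field_simps)
  ultimately show ?thesis
    by (simp add: congJ_def J_smult_cancel)
qed

section \<open>The ordered monomials span the quotient\<close>

fun pbw :: "'k::field \<Rightarrow> nat \<times> nat \<times> bool \<times> nat \<Rightarrow> 'k free_alg" where
  "pbw q (a, m, e, c) = E2 ^ a * W q ^ m * (if e then E3 q else 1) * E1 ^ c"

inductive_set pbw_span :: "'k::field \<Rightarrow> 'k free_alg set" for q where
  zero: "0 \<in> pbw_span q"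
| basis: "pbw q \<beta> \<in> pbw_span q"
| add: "x \<in> pbw_span q \<Longrightarrow> y \<in> pbw_span q \<Longrightarrow> x + y \<in> pbw_span q"
| smult: "x \<in> pbw_span q \<Longrightarrow> alg_smult c x \<in> pbw_span q"

definition pbw_spanned :: "'k::field \<Rightarrow> 'k free_alg \<Rightarrow> bool" where
  "pbw_spanned q x \<longleftrightarrow> (\<exists>y\<in>pbw_span q. congJ q x y)"

lemma pbw_spanned_congJ: "pbw_spanned q x \<Longrightarrow> congJ q x' x \<Longrightarrow> pbw_spanned q x'"
  unfolding pbw_spanned_def using congJ_trans by blast

lemma pbw_spanned_span: "y \<in> pbw_span q \<Longrightarrow> pbw_spanned q y"
  unfolding pbw_spanned_def using congJ_refl by blast

lemma pbw_spanned_zero: "pbw_spanned q 0"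
  and pbw_spanned_pbw: "pbw_spanned q (pbw q \<beta>)"
  by (intro pbw_spanned_span pbw_span.intros)+

lemma pbw_spanned_add: "pbw_spanned q x \<Longrightarrow> pbw_spanned q y \<Longrightarrow> pbw_spanned q (x + y)"
  unfolding pbw_spanned_def by (blast intro: pbw_span.add congJ_add)

lemma pbw_spanned_smult: "pbw_spanned q x \<Longrightarrow> pbw_spanned q (alg_smult c x)"
  unfolding pbw_spanned_def by (blast intro: pbw_span.smult congJ_smult)

lemma pbw_spanned_uminus: "pbw_spanned q x \<Longrightarrow> pbw_spanned q (- x)"
  using pbw_spanned_smult[of q x "-1"] by (simp add: alg_smult_minus_left)

lemma pbw_spanned_diff: "pbw_spanned q x \<Longrightarrow> pbw_spanned q y \<Longrightarrow> pbw_spanned q (x - y)"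
  using pbw_spanned_add[of q x "- y"] pbw_spanned_uminus[of q y] by simp

lemma pbw_spanned_mult_left:
  assumes "\<And>\<beta>. pbw_spanned q (X * pbw q \<beta>)" and "pbw_spanned q x"
  shows "pbw_spanned q (X * x)"
proof -
  obtain y where y: "y \<in> pbw_span q" "congJ q x y"
    using assms(2) unfolding pbw_spanned_def by blast
  from y(1) have "pbw_spanned q (X * y)"
    by (induction rule: pbw_span.induct)
       (simp_all add: assms(1) pbw_spanned_zero distrib_left pbw_spanned_add pbw_spanned_smult)
  then show ?thesis
    using y(2) by (blast intro: pbw_spanned_congJ congJ_mult_left)
qed

lemma E2_mult_pbw: "E2 * pbw q (a, m, e, c) = pbw q (Suc a, m, e, c)"
  by (simp add: mult.assoc)

lemma pbw_spanned_E2_mult: "pbw_spanned q x \<Longrightarrow> pbw_spanned q (E2 * x)"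
  by (rule pbw_spanned_mult_left) (auto simp: E2_mult_pbw pbw_spanned_pbw simp del: pbw.simps)

lemma W_mult_pbw:
  assumes "(q::'k::field) \<noteq> 0"
  shows "congJ q (W q * pbw q (a, m, e, c))
    (alg_smult ((inverse q ^ 2) ^ a) (pbw q (a, Suc m, e, c)))"
  using congJ_mult_right[OF congJ_power_commute[OF W_E2_commute[OF assms]],
      of a "W q ^ m * (if e then E3 q else 1) * E1 ^ c"]
  by (simp add: mult.assoc)

lemma E3_mult_pbw_0:
  assumes q: "(q::'k::field) \<noteq> 0" "q^2 \<noteq> 1"
  shows "pbw_spanned q (E3 q * pbw q (0, m, e, c))"
proof -
  have "E3 q * pbw q (0, m, e, c) = (E3 q * W q ^ m) * ((if e then E3 q else 1) * E1 ^ c)"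
    by (simp add: mult.assoc)
  also have "congJ q \<dots>
      (alg_smult ((inverse q ^ 2) ^ m) (W q ^ m * E3 q) * ((if e then E3 q else 1) * E1 ^ c))"
    by (intro congJ_mult_right congJ_power_commute E3_W_commute q(1))
  also have "\<dots> = alg_smult ((inverse q ^ 2) ^ m)
      (W q ^ m * (E3 q * (if e then E3 q else 1)) * E1 ^ c)"
    by (simp add: mult.assoc)
  finally have reorder: "congJ q (E3 q * pbw q (0, m, e, c)) \<dots>" .
  have "pbw_spanned q (W q ^ m * (E3 q * (if e then E3 q else 1)) * E1 ^ c)"
  proof (cases e)
    case False
    then show ?thesis using pbw_spanned_pbw[of q "(0, m, True, c)"] by simp
  next
    case True
    have "congJ q (W q ^ m * (E3 q * E3 q) * E1 ^ c)
        (W q ^ m * (- alg_smult (1 + inverse q ^ 2) (W q * E1)) * E1 ^ c)"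
      by (rule congJ_mult_both[OF E3_square[OF q]])
    also have "\<dots> = - alg_smult (1 + inverse q ^ 2) (pbw q (0, Suc m, False, Suc c))"
      by (simp add: mult.assoc power_Suc[of E1] del: power_Suc add: power_Suc2[of "W q"])
    finally have "pbw_spanned q (W q ^ m * (E3 q * E3 q) * E1 ^ c)"
      by (blast intro: pbw_spanned_congJ pbw_spanned_uminus pbw_spanned_smult pbw_spanned_pbw)
    with True show ?thesis by simp
  qed
  then show ?thesis
    using reorder by (blast intro: pbw_spanned_congJ pbw_spanned_smult)
qed

lemma E1_mult_pbw_0:
  assumes q: "(q::'k::field) \<noteq> 0"
  shows "pbw_spanned q (E1 * pbw q (0, m, e, c))"
proof -
  have "E1 * pbw q (0, m, e, c) = (E1 * W q ^ m) * ((if e then E3 q else 1) * E1 ^ c)"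
    by (simp add: mult.assoc)
  also have "congJ q \<dots>
      (alg_smult ((inverse q ^ 4) ^ m) (W q ^ m * E1) * ((if e then E3 q else 1) * E1 ^ c))"
    by (intro congJ_mult_right congJ_power_commute E1_W_commute)
  also have "\<dots> = alg_smult ((inverse q ^ 4) ^ m)
      (W q ^ m * (E1 * (if e then E3 q else 1)) * E1 ^ c)"
    by (simp add: mult.assoc)
  finally have reorder: "congJ q (E1 * pbw q (0, m, e, c)) \<dots>" .
  have "pbw_spanned q (W q ^ m * (E1 * (if e then E3 q else 1)) * E1 ^ c)"
  proof (cases e)
    case False
    then show ?thesis using pbw_spanned_pbw[of q "(0, m, False, Suc c)"] by (simp add: mult.assoc)
  next
    case True
    have "congJ q (W q ^ m * (E1 * E3 q) * E1 ^ c)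
        (W q ^ m * alg_smult (inverse q ^ 2) (E3 q * E1) * E1 ^ c)"
      by (rule congJ_mult_both[OF E1_E3_commute[OF q]])
    also have "\<dots> = alg_smult (inverse q ^ 2) (pbw q (0, m, True, Suc c))"
      by (simp add: mult.assoc)
    finally have "pbw_spanned q (W q ^ m * (E1 * E3 q) * E1 ^ c)"
      by (blast intro: pbw_spanned_congJ pbw_spanned_smult pbw_spanned_pbw)
    with True show ?thesis by simp
  qed
  then show ?thesis
    using reorder by (blast intro: pbw_spanned_congJ pbw_spanned_smult)
qed

lemma E3_mult_pbw:
  assumes q: "(q::'k::field) \<noteq> 0" "q^2 \<noteq> 1"
  shows "pbw_spanned q (E3 q * pbw q (a, m, e, c))"
proof (induction a)
  case 0
  then show ?case by (rule E3_mult_pbw_0[OF q])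
next
  case (Suc a)
  have "E3 q * pbw q (Suc a, m, e, c) = (E3 q * E2) * pbw q (a, m, e, c)"
    by (simp add: mult.assoc)
  also have "\<dots> = E2 * (E3 q * pbw q (a, m, e, c)) - W q * pbw q (a, m, e, c)"
    by (simp add: E3_E2_reorder left_diff_distrib mult.assoc del: pbw.simps)
  finally show ?case
    using Suc.IH W_mult_pbw[OF q(1), of a m e c]
    by (auto intro!: pbw_spanned_diff pbw_spanned_E2_mult
        intro: pbw_spanned_congJ pbw_spanned_smult pbw_spanned_pbw simp del: pbw.simps)
qed

lemma E1_mult_pbw:
  assumes q: "(q::'k::field) \<noteq> 0" "q^2 \<noteq> 1"
  shows "pbw_spanned q (E1 * pbw q (a, m, e, c))"
proof (induction a)
  case 0
  then show ?case by (rule E1_mult_pbw_0[OF q(1)])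
next
  case (Suc a)
  have "E1 * pbw q (Suc a, m, e, c) = (E1 * E2) * pbw q (a, m, e, c)"
    by (simp add: mult.assoc)
  also have "\<dots> = E3 q * pbw q (a, m, e, c) + alg_smult (q^2) (E2 * (E1 * pbw q (a, m, e, c)))"
    by (simp add: E1_E2_reorder[of q] distrib_right mult.assoc del: pbw.simps)
  finally show ?case
    using Suc.IH by (simp add: pbw_spanned_add pbw_spanned_smult pbw_spanned_E2_mult
        E3_mult_pbw[OF q] del: pbw.simps)
qed

lemma pbw_spanned_E1_mult:
  "(q::'k::field) \<noteq> 0 \<Longrightarrow> q^2 \<noteq> 1 \<Longrightarrow> pbw_spanned q x \<Longrightarrow> pbw_spanned q (E1 * x)"
  by (rule pbw_spanned_mult_left) (auto simp: E1_mult_pbw simp del: pbw.simps)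

theorem pbw_spanned_all:
  assumes "(q::'k::field) \<noteq> 0" "q^2 \<noteq> 1"
  shows "pbw_spanned q x"
proof -
  have "pbw_spanned q (alg_word w)" for w
  proof (induction w)
    case Nil
    then show ?case using pbw_spanned_pbw[of q "(0, 0, False, 0)"] by (simp add: alg_word_Nil)
  next
    case (Cons g w)
    show ?case
    proof (cases g)
      case G1
      then show ?thesis using pbw_spanned_E1_mult[OF assms Cons.IH] by (simp add: E1_def)
    next
      case G2
      then show ?thesis using pbw_spanned_E2_mult[OF Cons.IH] by (simp add: E2_def)
    qed
  qed
  then show ?thesis
    by (induction x rule: alg_word_induct) (simp_all add: pbw_spanned_smult pbw_spanned_add pbw_spanned_zero)
qed

section \<open>A faithful representation of the quotient\<close>

type_synonym 'k vec3 = "nat \<Rightarrow> nat \<Rightarrow> nat \<Rightarrow> 'k"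

text \<open>The right shifts \<open>R1\<close>, \<open>R2\<close>, \<open>R3\<close> commute with the left ones and realise right
  multiplication on the vectors \<open>x \<delta>\<^sub>0\<close>: by \<open>e\<^sub>1\<close> as \<open>R1\<close>, by \<open>e\<^sub>2\<close> as \<open>R3 + R3 R2\<close>.\<close>

definition L1 :: "'k::field vec3 \<Rightarrow> 'k vec3" where
  "L1 v = (\<lambda>i k j. case i of 0 \<Rightarrow> 0 | Suc i' \<Rightarrow> v i' k j)"
definition L2 :: "'k::field \<Rightarrow> 'k vec3 \<Rightarrow> 'k vec3" where
  "L2 q v = (\<lambda>i k j. case k of 0 \<Rightarrow> 0 | Suc k' \<Rightarrow> inverse q ^ (4 * i) * v i k' j)"
definition L3 :: "'k::field \<Rightarrow> 'k vec3 \<Rightarrow> 'k vec3" where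
  "L3 q v = (\<lambda>i k j. case j of 0 \<Rightarrow> 0 | Suc j' \<Rightarrow> q ^ (2 * i) * inverse q ^ (2 * k) * v i k j')"
definition R1 :: "'k::field \<Rightarrow> 'k vec3 \<Rightarrow> 'k vec3" where
  "R1 q v = (\<lambda>i k j. case i of 0 \<Rightarrow> 0 | Suc i' \<Rightarrow> q ^ (2 * j) * inverse q ^ (4 * k) * v i' k j)"
definition R2 :: "'k::field \<Rightarrow> 'k vec3 \<Rightarrow> 'k vec3" where
  "R2 q v = (\<lambda>i k j. case k of 0 \<Rightarrow> 0 | Suc k' \<Rightarrow> inverse q ^ (2 * j) * v i k' j)"
definition R3 :: "'k::field vec3 \<Rightarrow> 'k vec3" where
  "R3 v = (\<lambda>i k j. case j of 0 \<Rightarrow> 0 | Suc j' \<Rightarrow> v i k j')"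

lemmas shift_defs = L1_def L2_def L3_def R1_def R2_def R3_def

definition linear3 :: "('k::field vec3 \<Rightarrow> 'k vec3) \<Rightarrow> bool" where
  "linear3 T \<longleftrightarrow> (\<forall>v w. T (\<lambda>i k j. v i k j + w i k j) = (\<lambda>i k j. T v i k j + T w i k j)) \<and>
                 (\<forall>c v. T (\<lambda>i k j. c * v i k j) = (\<lambda>i k j. c * T v i k j))"

lemma linear3_zero:
  assumes "linear3 T" shows "T (\<lambda>i k j. 0) = (\<lambda>i k j. 0)"
proof -
  from assms have "\<And>c v. T (\<lambda>i k j. c * v i k j) = (\<lambda>i k j. c * T v i k j)"
    by (simp add: linear3_def)
  then have "T (\<lambda>i k j. 0 * (\<lambda>i k j. 0) i k j) = (\<lambda>i k j. 0 * T (\<lambda>i k j. 0) i k j)" .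
  then show ?thesis by simp
qed

lemma linear3_add: "linear3 T \<Longrightarrow> T (\<lambda>i k j. v i k j + w i k j) = (\<lambda>i k j. T v i k j + T w i k j)"
  unfolding linear3_def by blast

lemma linear3_sum:
  assumes "linear3 T" "finite S"
  shows "T (\<lambda>i k j. \<Sum>s\<in>S. c s * f s i k j) = (\<lambda>i k j. \<Sum>s\<in>S. c s * T (f s) i k j)"
  using assms(2)
proof (induction S rule: finite_induct)
  case empty then show ?case using assms(1) by (simp add: linear3_zero)
next
  case (insert x F)
  then have "T (\<lambda>i k j. \<Sum>s\<in>insert x F. c s * f s i k j) =
     T (\<lambda>i k j. c x * f x i k j + (\<Sum>s\<in>F. c s * f s i k j))" by simp
  also have "\<dots> = (\<lambda>i k j. c x * T (f x) i k j + T (\<lambda>i k j. \<Sum>s\<in>F. c s * f s i k j) i k j)"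
    using assms(1) unfolding linear3_def by simp
  finally show ?case using insert by simp
qed

lemma linear3_shifts: "linear3 L1" "linear3 (L2 q)" "linear3 (L3 q)"
  "linear3 (R1 q)" "linear3 (R2 q)" "linear3 R3"
  unfolding linear3_def shift_defs
  by (simp_all add: fun_eq_iff distrib_left mult.left_commute split: nat.split)

definition gen_op :: "'k::field \<Rightarrow> gen \<Rightarrow> 'k vec3 \<Rightarrow> 'k vec3" where
  "gen_op q g = (case g of G1 \<Rightarrow> L1 | G2 \<Rightarrow> (\<lambda>v i k j. L3 q v i k j + L2 q (L3 q v) i k j))"

primrec word_op :: "'k::field \<Rightarrow> gen list \<Rightarrow> 'k vec3 \<Rightarrow> 'k vec3" where
  "word_op q [] v = v"
| "word_op q (g # w) v = gen_op q g (word_op q w v)"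

lemma linear3_word_op: "linear3 (word_op q w)"
proof (induction w)
  case Nil then show ?case by (simp add: linear3_def)
next
  case (Cons g w)
  have "linear3 (gen_op q g)"
    using linear3_shifts(1) linear3_shifts(2,3)[of q]
    by (cases g) (auto simp: gen_op_def linear3_def algebra_simps)
  with Cons show ?case by (simp add: linear3_def)
qed

lemma word_op_append: "word_op q (u @ w) v = word_op q u (word_op q w v)"
  by (induction u) auto

definition act :: "'k::field \<Rightarrow> 'k free_alg \<Rightarrow> 'k vec3 \<Rightarrow> 'k vec3" where
  "act q x v = (\<lambda>i k j. \<Sum>u\<in>alg_supp x. word_coeff x u * word_op q u v i k j)"

lemma act_eq_sum:
  assumes "finite S" "alg_supp x \<subseteq> S"
  shows "act q x v = (\<lambda>i k j. \<Sum>u\<in>S. word_coeff x u * word_op q u v i k j)"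
proof -
  have "(\<Sum>u\<in>alg_supp x. word_coeff x u * word_op q u v i k j)
      = (\<Sum>u\<in>S. word_coeff x u * word_op q u v i k j)" for i k j
    by (rule sum.mono_neutral_left) (use assms in \<open>auto simp: alg_supp_def\<close>)
  then show ?thesis by (simp add: act_def)
qed

lemma act_add: "act q (x + y) v = (\<lambda>i k j. act q x v i k j + act q y v i k j)"
proof -
  let ?S = "alg_supp x \<union> alg_supp y"
  have "finite ?S" by (simp add: finite_alg_supp)
  moreover have "alg_supp (x + y) \<subseteq> ?S" by (auto simp: alg_supp_def)
  ultimately show ?thesis
    using act_eq_sum[of ?S x q v] act_eq_sum[of ?S y q v] act_eq_sum[of ?S "x + y" q v]
    by (simp add: distrib_right sum.distrib)
qed

lemma act_smult: "act q (alg_smult c x) v = (\<lambda>i k j. c * act q x v i k j)"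
proof -
  have "alg_supp (alg_smult c x) \<subseteq> alg_supp x" by (auto simp: alg_supp_def)
  then show ?thesis
    using act_eq_sum[OF finite_alg_supp, of "alg_smult c x"]
    by (simp add: act_def sum_distrib_left mult.assoc)
qed

lemma act_zero: "act q 0 v = (\<lambda>i k j. 0)"
  by (simp add: act_def alg_supp_def)

lemma act_diff: "act q (x - y) v = (\<lambda>i k j. act q x v i k j - act q y v i k j)"
  using act_add[of q x "- y" v] act_smult[of q "-1" y v] by (simp add: alg_smult_minus_left)

lemma act_sum: "finite S \<Longrightarrow> act q (\<Sum>s\<in>S. f s) v = (\<lambda>i k j. \<Sum>s\<in>S. act q (f s) v i k j)"
  by (induction S rule: finite_induct) (simp_all add: act_zero act_add)

lemma act_word: "act q (alg_word u) v = word_op q u v"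
proof -
  have "alg_supp (alg_word u) \<subseteq> {u}" by (auto simp: alg_supp_def)
  then show ?thesis using act_eq_sum[of "{u}" "alg_word u" q v] by simp
qed

lemma act_word_mult: "act q (alg_word u * y) v = word_op q u (act q y v)"
proof -
  have "alg_word u * y = (\<Sum>w\<in>alg_supp y. alg_smult (word_coeff y w) (alg_word (u @ w)))"
    by (subst alg_word_expansion[of y]) (simp add: sum_distrib_left)
  then have "act q (alg_word u * y) v
      = (\<lambda>i k j. \<Sum>w\<in>alg_supp y. word_coeff y w * word_op q u (word_op q w v) i k j)"
    by (simp add: act_sum finite_alg_supp act_smult act_word word_op_append)
  also have "\<dots> = word_op q u (act q y v)"
    unfolding act_def by (simp add: linear3_sum[OF linear3_word_op finite_alg_supp])
  finally show ?thesis .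
qed

lemma act_mult: "act q (x * y) v = act q x (act q y v)"
proof -
  have "x * y = (\<Sum>u\<in>alg_supp x. alg_smult (word_coeff x u) (alg_word u * y))"
    by (subst alg_word_expansion[of x]) (simp add: sum_distrib_right)
  then show ?thesis
    by (simp add: act_sum finite_alg_supp act_smult act_word_mult act_def[of q x])
qed

lemma act_one: "act q 1 v = v"
  using act_word[of q "[]" v] by (simp add: alg_word_Nil)

lemma act_power: "act q (x ^ n) v = (act q x ^^ n) v"
  by (induction n arbitrary: v) (simp_all add: act_one act_mult)

lemma linear3_act: "linear3 (act q x)"
  using linear3_word_op[of q] unfolding linear3_def act_def
  by (simp add: distrib_left sum.distrib sum_distrib_left mult.left_commute)

lemma act_E1: "act q E1 v = L1 v"
  and act_E2: "act q E2 v = (\<lambda>i k j. L3 q v i k j + L2 q (L3 q v) i k j)"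
  by (simp_all add: E1_def E2_def act_word gen_op_def)

lemma act_E3: "(q::'k::field) \<noteq> 0 \<Longrightarrow>
    act q (E3 q) v = (\<lambda>i k j. (1 - q^4) * L1 (L3 q v) i k j)"
  unfolding E3_def
  by (simp add: act_diff act_smult act_mult act_E1 act_E2,
      simp add: fun_eq_iff shift_defs split: nat.split)
     (auto simp: field_simps, (simp_all add: numeral_eq_Suc power_add mult_ac)?)

lemma act_W: "(q::'k::field) \<noteq> 0 \<Longrightarrow>
    act q (W q) v = (\<lambda>i k j. (1 - q^4) * (q^2 - 1) * L1 (L3 q (L3 q v)) i k j)"
  unfolding W_def
  by (simp add: act_diff act_mult act_E3 act_E2,
      simp add: fun_eq_iff shift_defs split: nat.split)
     (auto simp: field_simps, (simp_all add: numeral_eq_Suc power_add mult_ac)?)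

lemma act_Z: "(q::'k::field) \<noteq> 0 \<Longrightarrow>
    act q (Z q) v = (\<lambda>i k j. (1 - q^4) * (inverse q ^ 2 - 1) * L1 (L2 q (L3 q (L3 q v))) i k j)"
  unfolding Z_def
  by (simp add: act_diff act_smult act_mult act_E3 act_E2,
      simp add: fun_eq_iff shift_defs split: nat.split)
     (auto simp: field_simps, (simp_all add: numeral_eq_Suc power_add mult_ac)?)

lemma act_Serre1: "(q::'k::field) \<noteq> 0 \<Longrightarrow> act q (Serre1 q) v = (\<lambda>i k j. 0)"
  by (simp add: Serre1_eq act_diff act_smult act_mult act_E3 act_E1,
      simp add: fun_eq_iff shift_defs split: nat.split)
     (auto simp: field_simps, (simp_all add: numeral_eq_Suc power_add mult_ac)?)

lemma act_Serre2: "(q::'k::field) \<noteq> 0 \<Longrightarrow> act q (Serre2 q) v = (\<lambda>i k j. 0)"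
  by (simp add: Serre2_eq act_diff act_smult act_mult act_W act_E2,
      simp add: fun_eq_iff shift_defs split: nat.split)
     (auto simp: field_simps, (simp_all add: numeral_eq_Suc power_add mult_ac)?)

lemma act_Zprime: "(q::'k::field) \<noteq> 0 \<Longrightarrow> act q (Zprime q) v = (\<lambda>i k j. 0)"
  by (simp add: Zprime_def act_diff act_smult act_mult act_W act_E1,
      simp add: fun_eq_iff shift_defs split: nat.split)
     (auto simp: field_simps, (simp_all add: numeral_eq_Suc power_add mult_ac)?)

lemma Abs_free_alg_mult:
  "a \<in> nc_carrier \<Longrightarrow> b \<in> nc_carrier \<Longrightarrow> Abs_free_alg (a \<otimes> b) = Abs_free_alg a * Abs_free_alg b"
  by (metis Abs_free_alg_inverse word_coeff_inverse word_coeff_ops(3))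

lemma Abs_free_alg_add:
  "a \<in> nc_carrier \<Longrightarrow> b \<in> nc_carrier \<Longrightarrow> Abs_free_alg (a \<oplus> b) = Abs_free_alg a + Abs_free_alg b"
  by (metis Abs_free_alg_inverse word_coeff_inverse word_coeff_ops(1))

lemma nc_ideal_acts_trivially:
  assumes "f \<in> nc_ideal {S1 q, S2 q, zprime q}" "(q::'k::field) \<noteq> 0"
  shows "f \<in> nc_carrier \<and> (\<forall>v. act q (Abs_free_alg f) v = (\<lambda>i k j. 0))"
  \<comment> \<open>\<open>Abs_free_alg\<close> is unspecified outside \<open>nc_carrier\<close>, so membership is carried along.\<close>
  using assms(1)
proof (induction rule: nc_ideal.induct)
  case zero
  have "Abs_free_alg nc_zero = (0 :: 'k free_alg)"
    using word_coeff_inverse[of 0] by (simp only: word_coeff_ops)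
  then show ?case using nc_carrier_zero act_zero[of q] by simp
next
  case (gen s a b)
  have "s \<in> word_coeff ` {Serre1 q, Serre2 q, Zprime q}"
    using gen(1) by (simp add: word_coeff_generators)
  then obtain g where g: "g \<in> {Serre1 q, Serre2 q, Zprime q}" "s = word_coeff g"
    by blast
  have g_acts: "act q g v = (\<lambda>i k j. 0)" for v
    using g(1) assms(2) by (auto simp: act_Serre1 act_Serre2 act_Zprime)
  have s: "s \<in> nc_carrier" "Abs_free_alg s = g"
    using g(2) by (simp_all add: word_coeff word_coeff_inverse)
  have "Abs_free_alg (a \<otimes> s \<otimes> b) = Abs_free_alg a * g * Abs_free_alg b"
    using gen(2,3) s by (simp add: Abs_free_alg_mult nc_carrier_mul)
  then show ?case
    using gen(2,3) s(1) g_acts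
    by (simp add: act_mult linear3_zero[OF linear3_act] nc_carrier_mul)
next
  case (add x y)
  have "act q (Abs_free_alg (x \<oplus> y)) v = (\<lambda>i k j. 0)" for v
    using add.IH by (simp only: Abs_free_alg_add act_add) simp
  with add.IH show ?case by (simp add: nc_carrier_add)
qed

lemma act_J:
  assumes "x \<in> J q" "(q::'k::field) \<noteq> 0"
  shows "act q x v = (\<lambda>i k j. 0)"
proof -
  have "word_coeff x \<in> nc_ideal {S1 q, S2 q, zprime q}"
    using assms(1) by (simp add: J_def Iq_def)
  from nc_ideal_acts_trivially[OF this assms(2)] show ?thesis
    by (simp add: word_coeff_inverse)
qed

definition delta3 :: "nat \<Rightarrow> nat \<Rightarrow> nat \<Rightarrow> 'k::field vec3" where
  "delta3 a b c = (\<lambda>i k j. if i = a \<and> k = b \<and> j = c then 1 else 0)"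

definition scale3 :: "'k::field \<Rightarrow> 'k vec3 \<Rightarrow> 'k vec3" where
  "scale3 c v = (\<lambda>i k j. c * v i k j)"

definition vec_of :: "'k::field \<Rightarrow> 'k free_alg \<Rightarrow> 'k vec3" where
  "vec_of q x = act q x (delta3 0 0 0)"

lemma linear3_scale3: "linear3 T \<Longrightarrow> T (scale3 c v) = scale3 c (T v)"
  unfolding linear3_def scale3_def by blast

lemma scale3_scale3 [simp]: "scale3 c (scale3 d v) = scale3 (c * d) v"
  by (simp add: scale3_def mult.assoc)

lemma shift_delta3:
  "L1 (delta3 a b c) = delta3 (Suc a) b c"
  "L2 q (delta3 a b c) = scale3 (inverse q ^ (4 * a)) (delta3 a (Suc b) c)"
  "L3 q (delta3 a b c) = scale3 (q ^ (2 * a) * inverse q ^ (2 * b)) (delta3 a b (Suc c))"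
  by (auto simp: fun_eq_iff shift_defs delta3_def scale3_def split: nat.split)

lemma act_scale3: "act q x (scale3 c v) = scale3 c (act q x v)"
  by (rule linear3_scale3[OF linear3_act])

lemma act_E1_power_delta3: "(act q E1 ^^ n) (delta3 a b c) = delta3 (a + n) b c"
  by (induction n) (simp_all add: act_E1 shift_delta3)

lemma scale3_witness: "C \<noteq> 0 \<Longrightarrow> \<exists>C'. C' \<noteq> 0 \<and> scale3 C v = scale3 C' v"
  by blast

lemma act_delta3_shift:
  assumes q: "(q::'k::field) \<noteq> 0" "q^2 \<noteq> 1" "q^4 \<noteq> 1"
  shows "\<exists>C. C \<noteq> 0 \<and> act q (E3 q) (delta3 a b c) = scale3 C (delta3 (a + 1) b (c + 1))"
    and "\<exists>C. C \<noteq> 0 \<and> act q (W q) (delta3 a b c) = scale3 C (delta3 (a + 1) b (c + 2))"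
    and "\<exists>C. C \<noteq> 0 \<and> act q (Z q) (delta3 a b c) = scale3 C (delta3 (a + 1) (b + 1) (c + 2))"
proof -
  have "1 - q^4 \<noteq> 0" "q^2 - 1 \<noteq> 0" "inverse q ^ 2 - 1 \<noteq> 0"
    using q by (auto simp: power_inverse field_simps)
  with q show
    "\<exists>C. C \<noteq> 0 \<and> act q (E3 q) (delta3 a b c) = scale3 C (delta3 (a + 1) b (c + 1))"
    "\<exists>C. C \<noteq> 0 \<and> act q (W q) (delta3 a b c) = scale3 C (delta3 (a + 1) b (c + 2))"
    "\<exists>C. C \<noteq> 0 \<and> act q (Z q) (delta3 a b c) = scale3 C (delta3 (a + 1) (b + 1) (c + 2))"
    by (simp_all add: act_E3 act_W act_Z shift_delta3 linear3_scale3 linear3_shifts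
        scale3_witness flip: scale3_def)
qed

lemma act_power_delta3:
  assumes "\<And>a b c. \<exists>C. C \<noteq> 0 \<and>
      act q x (delta3 a b c) = scale3 C (delta3 (a + da) (b + db) (c + dc))"
  shows "\<exists>C. C \<noteq> 0 \<and>
      act q (x ^ n) (delta3 a b c) = scale3 C (delta3 (a + n * da) (b + n * db) (c + n * dc))"
proof (induction n)
  case 0
  show ?case by (intro exI[of _ 1]) (simp add: scale3_def act_one)
next
  case (Suc n)
  then obtain C where C: "C \<noteq> 0"
    "act q (x ^ n) (delta3 a b c) = scale3 C (delta3 (a + n * da) (b + n * db) (c + n * dc))"
    by blast
  obtain D where D: "D \<noteq> 0" "act q x (delta3 (a + n * da) (b + n * db) (c + n * dc))
      = scale3 D (delta3 (a + Suc n * da) (b + Suc n * db) (c + Suc n * dc))"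
    using assms[of "a + n * da" "b + n * db" "c + n * dc"] by (auto simp: algebra_simps)
  show ?case
    using C D by (simp add: act_mult act_scale3 scale3_witness)
qed

lemma act_E2_apply:
  "act q E2 v i k j = (case j of 0 \<Rightarrow> 0 | Suc j' \<Rightarrow>
      q ^ (2 * i) * inverse q ^ (2 * k) * v i k j' +
      (case k of 0 \<Rightarrow> 0 | Suc k' \<Rightarrow> inverse q ^ (4 * i) * (q ^ (2 * i) * inverse q ^ (2 * k') * v i k' j')))"
  by (simp add: act_E2 L2_def L3_def split: nat.split)

lemma act_E2_power_delta3_support:
  "act q (E2 ^ n) (delta3 a b d) i k j \<noteq> 0 \<Longrightarrow> i = a \<and> j = d + n \<and> k \<le> b + n"
proof (induction n arbitrary: k j)
  case 0
  then show ?case by (simp add: act_one delta3_def split: if_splits)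
next
  case (Suc n)
  then obtain j' where j: "j = Suc j'"
    by (cases j) (simp_all add: act_mult act_E2_apply)
  then have "act q (E2 ^ n) (delta3 a b d) i k j' \<noteq> 0 \<or>
      (\<exists>k'. k = Suc k' \<and> act q (E2 ^ n) (delta3 a b d) i k' j' \<noteq> 0)"
    using Suc.prems by (cases k) (auto simp: act_mult act_E2_apply)
  then show ?case
    using Suc.IH j by fastforce
qed

lemma act_E2_power_delta3_leading:
  assumes "(q::'k::field) \<noteq> 0"
  shows "act q (E2 ^ n) (delta3 a b d) a (b + n) (d + n) \<noteq> 0"
proof (induction n)
  case 0
  then show ?case by (simp add: act_one delta3_def)
next
  case (Suc n)
  have "act q (E2 ^ n) (delta3 a b d) a (Suc (b + n)) (d + n) = 0"
    using act_E2_power_delta3_support[of q n a b d a "Suc (b + n)" "d + n"] by auto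
  then have "act q (E2 ^ Suc n) (delta3 a b d) a (b + Suc n) (d + Suc n) =
      inverse q ^ (4 * a) * (q ^ (2 * a) * inverse q ^ (2 * (b + n))
        * act q (E2 ^ n) (delta3 a b d) a (b + n) (d + n))"
    by (simp add: act_mult act_E2_apply)
  with Suc.IH assms show ?case by simp
qed

lemma vec_of_pbw:
  assumes q: "(q::'k::field) \<noteq> 0" "q^2 \<noteq> 1" "q^4 \<noteq> 1"
  shows "\<exists>C. C \<noteq> 0 \<and> vec_of q (pbw q (a, m, e, c))
      = scale3 C (act q (E2 ^ a) (delta3 (m + of_bool e + c) 0 (2 * m + of_bool e)))"
proof -
  obtain C1 where C1: "C1 \<noteq> 0" "act q (if e then E3 q else 1) (delta3 c 0 0)
      = scale3 C1 (delta3 (c + of_bool e) 0 (of_bool e))"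
    using act_delta3_shift(1)[OF q, of c 0 0]
    by (cases e) (auto simp: act_one scale3_def intro: that[of 1])
  obtain C2 where C2: "C2 \<noteq> 0" "act q (W q ^ m) (delta3 (c + of_bool e) 0 (of_bool e))
      = scale3 C2 (delta3 (m + of_bool e + c) 0 (2 * m + of_bool e))"
    using act_power_delta3[of q "W q" 1 0 2 m "c + of_bool e" 0 "of_bool e"]
      act_delta3_shift(2)[OF q]
    by (auto simp: algebra_simps)
  have "vec_of q (pbw q (a, m, e, c))
      = act q (E2 ^ a) (act q (W q ^ m) (act q (if e then E3 q else 1) (delta3 c 0 0)))"
    by (simp add: vec_of_def act_mult act_power[of q E1] act_E1_power_delta3)
  also have "\<dots> = scale3 (C1 * C2) (act q (E2 ^ a) (delta3 (m + of_bool e + c) 0 (2 * m + of_bool e)))"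
    by (simp add: C1 C2 act_scale3 mult.commute)
  finally show ?thesis using C1 C2 by (simp add: scale3_witness)
qed

lemma vec_of_pbw_support:
  assumes q: "(q::'k::field) \<noteq> 0" "q^2 \<noteq> 1" "q^4 \<noteq> 1"
    and "vec_of q (pbw q (a, m, e, c)) i k j \<noteq> 0"
  shows "i = m + of_bool e + c \<and> j = 2 * m + of_bool e + a \<and> k \<le> a"
  using assms(4) vec_of_pbw[OF q, of a m e c]
    act_E2_power_delta3_support[of q a "m + of_bool e + c" 0 "2 * m + of_bool e" i k j]
  by (auto simp: scale3_def)

lemma vec_of_pbw_leading:
  assumes q: "(q::'k::field) \<noteq> 0" "q^2 \<noteq> 1" "q^4 \<noteq> 1"
  shows "vec_of q (pbw q (a, m, e, c)) (m + of_bool e + c) a (2 * m + of_bool e + a) \<noteq> 0"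
  using vec_of_pbw[OF q, of a m e c]
    act_E2_power_delta3_leading[OF q(1), of a "m + of_bool e + c" 0 "2 * m + of_bool e"]
  by (auto simp: scale3_def add.commute)

lemma pbw_span_eq_sum:
  assumes "y \<in> pbw_span q"
  shows "\<exists>F cf. finite F \<and> (\<forall>\<beta>. \<beta> \<notin> F \<longrightarrow> cf \<beta> = 0)
    \<and> y = (\<Sum>\<beta>\<in>F. alg_smult (cf \<beta>) (pbw q \<beta>))"
  using assms
proof (induction rule: pbw_span.induct)
  case zero
  show ?case by (intro exI[of _ "{}"] exI[of _ "\<lambda>_. 0"]) simp
next
  case (basis \<beta>)
  show ?case by (intro exI[of _ "{\<beta>}"] exI[of _ "\<lambda>\<gamma>. if \<gamma> = \<beta> then 1 else 0"]) simp
next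
  case (add x y)
  then obtain F1 cf1 F2 cf2 where
    h: "finite F1" "\<forall>\<beta>. \<beta> \<notin> F1 \<longrightarrow> cf1 \<beta> = 0" "x = (\<Sum>\<beta>\<in>F1. alg_smult (cf1 \<beta>) (pbw q \<beta>))"
       "finite F2" "\<forall>\<beta>. \<beta> \<notin> F2 \<longrightarrow> cf2 \<beta> = 0" "y = (\<Sum>\<beta>\<in>F2. alg_smult (cf2 \<beta>) (pbw q \<beta>))"
    by blast
  have "(\<Sum>\<beta>\<in>F1 \<union> F2. alg_smult (cf1 \<beta>) (pbw q \<beta>)) = x"
    unfolding h(3) by (rule sum.mono_neutral_right) (use h in auto)
  moreover have "(\<Sum>\<beta>\<in>F1 \<union> F2. alg_smult (cf2 \<beta>) (pbw q \<beta>)) = y"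
    unfolding h(6) by (rule sum.mono_neutral_right) (use h in auto)
  ultimately have "x + y = (\<Sum>\<beta>\<in>F1 \<union> F2. alg_smult (cf1 \<beta> + cf2 \<beta>) (pbw q \<beta>))"
    by (simp add: alg_smult_add_left sum.distrib)
  then show ?case
    using h by (intro exI[of _ "F1 \<union> F2"] exI[of _ "\<lambda>\<beta>. cf1 \<beta> + cf2 \<beta>"]) auto
next
  case (smult x c)
  then obtain F cf where
    h: "finite F" "\<forall>\<beta>. \<beta> \<notin> F \<longrightarrow> cf \<beta> = 0" "x = (\<Sum>\<beta>\<in>F. alg_smult (cf \<beta>) (pbw q \<beta>))"
    by blast
  then show ?case
    by (intro exI[of _ F] exI[of _ "\<lambda>\<beta>. c * cf \<beta>"]) (auto simp: alg_smult_sum)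
qed

lemma pbw_leading_unique:
  assumes q: "(q::'k::field) \<noteq> 0" "q^2 \<noteq> 1" "q^4 \<noteq> 1"
    and nz: "vec_of q (pbw q (a, m, e, c)) (m0 + of_bool e0 + c0) a0 (2 * m0 + of_bool e0 + a0) \<noteq> 0"
    and "a \<le> a0"
  shows "(a, m, e, c) = (a0, m0, e0, c0)"
proof -
  have a: "a = a0" and i: "m0 + of_bool e0 + c0 = m + of_bool e + c"
    and j: "2 * m0 + of_bool e0 = 2 * m + of_bool e"
    using vec_of_pbw_support[OF q nz] assms(5) by auto
  from j have "m = m0 \<and> e = e0"
    by (cases e; cases e0; simp; presburger)
  with a i show ?thesis by simp
qed

lemma pbw_independent:
  assumes q: "(q::'k::field) \<noteq> 0" "q^2 \<noteq> 1" "q^4 \<noteq> 1" and F: "finite F"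
    and vanish: "vec_of q (\<Sum>\<beta>\<in>F. alg_smult (cf \<beta>) (pbw q \<beta>)) = (\<lambda>i k j. 0)"
  shows "\<forall>\<beta>\<in>F. cf \<beta> = 0"
proof (rule ccontr)
  assume "\<not> (\<forall>\<beta>\<in>F. cf \<beta> = 0)"
  \<comment> \<open>At the leading point of a monomial of maximal \<open>E2\<close>-degree with nonzero coefficient,
    no other monomial contributes.\<close>
  define G where "G = {\<beta>\<in>F. cf \<beta> \<noteq> 0}"
  have G: "finite G" "G \<noteq> {}"
    using F \<open>\<not> (\<forall>\<beta>\<in>F. cf \<beta> = 0)\<close> by (auto simp: G_def)
  then have "Max (fst ` G) \<in> fst ` G" by (intro Max_in) auto
  then obtain a0 m0 e0 c0 where top: "(a0, m0, e0, c0) \<in> G" "a0 = Max (fst ` G)"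
    by force
  have max: "a \<le> a0" if "(a, m, e, c) \<in> G" for a m e c
    using G that top(2) by (metis Max_ge finite_imageI fst_conv image_eqI)
  define i0 j0 where "i0 = m0 + of_bool e0 + c0" and "j0 = 2 * m0 + of_bool e0 + a0"
  have others: "cf \<beta> * vec_of q (pbw q \<beta>) i0 a0 j0 = 0"
    if "\<beta> \<in> F - {(a0, m0, e0, c0)}" for \<beta>
  proof (cases "cf \<beta> = 0")
    case False
    obtain a m e c where \<beta>: "\<beta> = (a, m, e, c)" by (cases \<beta>) auto
    with that False have "a \<le> a0" "\<beta> \<noteq> (a0, m0, e0, c0)"
      using max by (auto simp: G_def)
    then show ?thesis
      using pbw_leading_unique[OF q, of a m e c m0 e0 c0 a0] \<beta> by (auto simp: i0_def j0_def)
  qed simp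
  have "vec_of q (\<Sum>\<beta>\<in>F. alg_smult (cf \<beta>) (pbw q \<beta>)) i0 a0 j0
      = (\<Sum>\<beta>\<in>F. cf \<beta> * vec_of q (pbw q \<beta>) i0 a0 j0)"
    using F by (simp add: vec_of_def act_sum act_smult)
  also have "\<dots> = cf (a0, m0, e0, c0) * vec_of q (pbw q (a0, m0, e0, c0)) i0 a0 j0"
  proof -
    have "(\<Sum>\<beta>\<in>F - {(a0, m0, e0, c0)}. cf \<beta> * vec_of q (pbw q \<beta>) i0 a0 j0) = 0"
      using others by (intro sum.neutral) blast
    moreover have "(a0, m0, e0, c0) \<in> F" using top(1) by (simp add: G_def)
    ultimately show ?thesis using F by (simp add: sum.remove del: pbw.simps)
  qed
  also have "\<dots> \<noteq> 0"
    using top(1) vec_of_pbw_leading[OF q] by (simp add: G_def i0_def j0_def del: pbw.simps)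
  finally show False using vanish by simp
qed

theorem vec_of_eq_0_iff:
  assumes q: "(q::'k::field) \<noteq> 0" "q^2 \<noteq> 1" "q^4 \<noteq> 1"
  shows "vec_of q x = (\<lambda>i k j. 0) \<longleftrightarrow> x \<in> J q"
proof
  assume vanish: "vec_of q x = (\<lambda>i k j. 0)"
  obtain y where y: "y \<in> pbw_span q" "congJ q x y"
    using pbw_spanned_all[OF q(1,2)] unfolding pbw_spanned_def by blast
  obtain F cf where F: "finite F" "y = (\<Sum>\<beta>\<in>F. alg_smult (cf \<beta>) (pbw q \<beta>))"
    using pbw_span_eq_sum[OF y(1)] by blast
  have "vec_of q (x - y) = (\<lambda>i k j. 0)"
    using y(2) q(1) by (simp add: congJ_def vec_of_def act_J)
  then have "vec_of q y = (\<lambda>i k j. 0)"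
    using vanish by (simp add: vec_of_def act_diff fun_eq_iff)
  then have "\<forall>\<beta>\<in>F. cf \<beta> = 0"
    using pbw_independent[OF q F(1)] F(2) by simp
  then have "y = 0"
    using F(2) by simp
  then show "x \<in> J q" using y(2) by (simp add: congJ_def)
qed (simp add: vec_of_def act_J q(1))

section \<open>The centre\<close>

lemma right_shifts_commute:
  assumes "(q::'k::field) \<noteq> 0"
  shows "R1 q (L1 v) = L1 (R1 q v)" "R1 q (L2 q v) = L2 q (R1 q v)" "R1 q (L3 q v) = L3 q (R1 q v)"
    "R2 q (L1 v) = L1 (R2 q v)" "R2 q (L2 q v) = L2 q (R2 q v)" "R2 q (L3 q v) = L3 q (R2 q v)"
    "R3 (L1 v) = L1 (R3 v)" "R3 (L2 q v) = L2 q (R3 v)" "R3 (L3 q v) = L3 q (R3 v)"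
  using assms by (auto simp: fun_eq_iff shift_defs mult_ac power_add numeral_eq_Suc split: nat.split)

lemma act_commute:
  assumes "linear3 R" "\<And>v. R (L1 v) = L1 (R v)" "\<And>v. R (L2 q v) = L2 q (R v)"
    "\<And>v. R (L3 q v) = L3 q (R v)"
  shows "R (act q x v) = act q x (R v)"
proof -
  have "R (gen_op q g w) = gen_op q g (R w)" for g w
    by (cases g) (simp_all add: gen_op_def assms linear3_add)
  then have "R (word_op q u w) = word_op q u (R w)" for u w
    by (induction u) simp_all
  then show ?thesis
    unfolding act_def by (simp add: linear3_sum[OF assms(1) finite_alg_supp])
qed

lemma vec_of_E1_mult: "vec_of q (E1 * x) = L1 (vec_of q x)"
  and vec_of_E2_mult: "vec_of q (E2 * x) = (\<lambda>i k j. L3 q (vec_of q x) i k j + L2 q (L3 q (vec_of q x)) i k j)"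
  by (simp_all add: vec_of_def act_mult act_E1 act_E2)

lemma vec_of_mult_E1:
  assumes "(q::'k::field) \<noteq> 0"
  shows "vec_of q (x * E1) = R1 q (vec_of q x)"
proof -
  have "act q E1 (delta3 0 0 0) = R1 q (delta3 0 0 0)"
    by (auto simp: act_E1 fun_eq_iff L1_def R1_def delta3_def split: nat.split) (use gr0I in force)
  then show ?thesis
    using act_commute[OF linear3_shifts(4) right_shifts_commute(1-3)[OF assms]]
    by (simp add: vec_of_def act_mult)
qed

lemma vec_of_mult_E2:
  assumes "(q::'k::field) \<noteq> 0"
  shows "vec_of q (x * E2) = (\<lambda>i k j. R3 (vec_of q x) i k j + R3 (R2 q (vec_of q x)) i k j)"
proof -
  have "act q E2 (delta3 0 0 0) = (\<lambda>i k j. R3 (delta3 0 0 0) i k j + R3 (R2 q (delta3 0 0 0)) i k j)"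
    by (auto simp: act_E2 fun_eq_iff shift_defs delta3_def split: nat.split)
  then show ?thesis
    using act_commute[OF linear3_shifts(5) right_shifts_commute(4-6)[OF assms]]
      act_commute[OF linear3_shifts(6) right_shifts_commute(7-9)[OF assms]]
    by (simp add: vec_of_def act_mult linear3_add[OF linear3_act])
qed

lemma power_ratio_eq_1_imp_eq:
  assumes "(q::'k::field) \<noteq> 0" "\<forall>n::nat. n > 0 \<longrightarrow> q ^ n \<noteq> 1"
    and "q ^ a * inverse q ^ b = 1"
  shows "a = b"
proof (rule ccontr)
  assume "a \<noteq> b"
  have "q ^ a = q ^ b"
    using assms(1,3) by (simp add: power_inverse field_simps)
  then have "q ^ (max a b - min a b) = 1"
    using assms(1) by (cases "a \<le> b") (auto simp: power_diff max_def min_def)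
  with assms(2) \<open>a \<noteq> b\<close> show False by simp
qed

definition zpow_coeff :: "'k::field \<Rightarrow> nat \<Rightarrow> 'k" where
  "zpow_coeff q n = vec_of q (Z q ^ n) n n (2 * n)"

lemma vec_of_Z_power:
  assumes q: "(q::'k::field) \<noteq> 0" "q^2 \<noteq> 1" "q^4 \<noteq> 1"
  shows "vec_of q (Z q ^ n) i k j = (if i = n \<and> k = n \<and> j = 2 * n then zpow_coeff q n else 0)"
    and "zpow_coeff q n \<noteq> 0"
proof -
  obtain C where C: "C \<noteq> 0" "vec_of q (Z q ^ n) = scale3 C (delta3 n n (2 * n))"
    using act_power_delta3[OF act_delta3_shift(3)[OF q], of n 0 0 0]
    by (auto simp: vec_of_def mult.commute)
  then show "vec_of q (Z q ^ n) i k j = (if i = n \<and> k = n \<and> j = 2 * n then zpow_coeff q n else 0)"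
    and "zpow_coeff q n \<noteq> 0"
    by (simp_all add: zpow_coeff_def scale3_def delta3_def)
qed

definition Z_peval :: "'k::field \<Rightarrow> 'k poly \<Rightarrow> 'k free_alg" where
  "Z_peval q p = (\<Sum>n\<le>degree p. alg_smult (coeff p n) (Z q ^ n))"

lemma word_coeff_Z_peval: "word_coeff (Z_peval q p) = nc_peval p (zz q)"
  by (simp add: fun_eq_iff Z_peval_def nc_peval_def word_coeff_sum word_coeff_power
      word_coeff_generators)

lemma vec_of_Z_peval:
  assumes q: "(q::'k::field) \<noteq> 0" "q^2 \<noteq> 1" "q^4 \<noteq> 1"
  shows "vec_of q (Z_peval q p) i k j = (if k = i \<and> j = 2 * i then coeff p i * zpow_coeff q i else 0)"
proof -
  have "vec_of q (Z_peval q p) i k j = (\<Sum>n\<le>degree p. coeff p n * vec_of q (Z q ^ n) i k j)"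
    by (simp add: Z_peval_def vec_of_def act_sum act_smult)
  also have "\<dots> = (\<Sum>n\<le>degree p. if n = i then
      (if k = i \<and> j = 2 * i then coeff p i * zpow_coeff q i else 0) else 0)"
    by (rule sum.cong) (auto simp: vec_of_Z_power(1)[OF q])
  also have "\<dots> = (if k = i \<and> j = 2 * i then coeff p i * zpow_coeff q i else 0)"
    by (auto simp: coeff_eq_0 not_le)
  finally show ?thesis .
qed

lemma word_op_first_index_bound:
  assumes "\<And>i k j. v i k j \<noteq> 0 \<Longrightarrow> i \<le> M"
  shows "word_op q u v i k j \<noteq> 0 \<Longrightarrow> i \<le> M + length u"
proof (induction u arbitrary: i k j)
  case Nil then show ?case using assms by simp
next
  case (Cons g u)
  show ?case
  proof (cases g)
    case G1
    then obtain i' where "i = Suc i'" "word_op q u v i' k j \<noteq> 0"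
      using Cons.prems by (cases i) (auto simp: gen_op_def L1_def)
    then show ?thesis using Cons.IH by fastforce
  next
    case G2
    have "\<exists>k' j'. word_op q u v i k' j' \<noteq> 0"
    proof (rule ccontr)
      assume "\<nexists>k' j'. word_op q u v i k' j' \<noteq> 0"
      then have "word_op q (g # u) v i k j = 0"
        using G2 by (simp add: gen_op_def L2_def L3_def split: nat.split)
      with Cons.prems show False by simp
    qed
    then show ?thesis using Cons.IH by fastforce
  qed
qed

lemma vec_of_first_index_bounded: "\<exists>N. \<forall>i k j. vec_of q x i k j \<noteq> 0 \<longrightarrow> i < N"
proof -
  define N where "N = Suc (Max (insert 0 (length ` alg_supp x)))"
  have "i < N" if nz: "vec_of q x i k j \<noteq> 0" for i k j
  proof -
    obtain u where u: "u \<in> alg_supp x" "word_op q u (delta3 0 0 0) i k j \<noteq> 0"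
      using nz unfolding vec_of_def act_def by (auto elim: sum.not_neutral_contains_not_neutral)
    have "i \<le> 0 + length u"
      by (rule word_op_first_index_bound[OF _ u(2)]) (simp add: delta3_def split: if_splits)
    moreover have "length u \<le> Max (insert 0 (length ` alg_supp x))"
      using u(1) finite_alg_supp by (intro Max_ge) auto
    ultimately show ?thesis by (simp add: N_def)
  qed
  then show ?thesis by blast
qed

lemma vec_of_diff: "vec_of q (x - y) i k j = vec_of q x i k j - vec_of q y i k j"
  by (simp add: vec_of_def act_diff)

lemma vec_of_central_support:
  assumes q: "(q::'k::field) \<noteq> 0" "\<forall>n::nat. n > 0 \<longrightarrow> q ^ n \<noteq> 1"
    and c1: "x * E1 - E1 * x \<in> J q" and c2: "x * E2 - E2 * x \<in> J q"
    and nz: "vec_of q x i k j \<noteq> 0"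
  shows "k = i \<and> j = 2 * i"
proof -
  define v where "v = vec_of q x"
  have "vec_of q (x * E1 - E1 * x) i k j = 0" "vec_of q (x * E2 - E2 * x) i k j = 0" for i k j
    by (simp_all add: vec_of_def act_J[OF c1 q(1)] act_J[OF c2 q(1)])
  then have comm1: "R1 q v i k j = L1 v i k j"
    and comm2: "R3 v i k j + R3 (R2 q v) i k j = L3 q v i k j + L2 q (L3 q v) i k j" for i k j
    by (simp_all add: vec_of_diff vec_of_mult_E1[OF q(1)] vec_of_E1_mult
        vec_of_mult_E2[OF q(1)] vec_of_E2_mult v_def)
  have j_eq: "j = 2 * k" if "v i k j \<noteq> 0" for i k j
  proof -
    have "q ^ (2 * j) * inverse q ^ (4 * k) * v i k j = v i k j"
      using comm1[of "Suc i" k j] by (simp add: R1_def L1_def)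
    with that have "2 * j = 4 * k"
      by (intro power_ratio_eq_1_imp_eq[OF q]) simp
    then show ?thesis by simp
  qed
  have "v i k' (Suc (Suc (2 * k'))) = 0" for k'
    using j_eq[of i k' "Suc (Suc (2 * k'))"] by auto
  then have "v i k (2 * k) = q ^ (2 * i) * inverse q ^ (2 * k) * v i k (2 * k)"
    using comm2[of i k "Suc (2 * k)"] by (cases k) (simp_all add: shift_defs)
  moreover have "v i k (2 * k) \<noteq> 0"
    using nz j_eq by (auto simp: v_def)
  ultimately have "2 * i = 2 * k"
    by (intro power_ratio_eq_1_imp_eq[OF q]) simp
  moreover have "j = 2 * k"
    using j_eq nz by (simp add: v_def)
  ultimately show ?thesis by simp
qed

lemma central_mod_J_imp_Z_peval:
  assumes q: "(q::'k::field) \<noteq> 0" "\<forall>n::nat. n > 0 \<longrightarrow> q ^ n \<noteq> 1"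
    and c1: "x * E1 - E1 * x \<in> J q" and c2: "x * E2 - E2 * x \<in> J q"
  shows "\<exists>p. x - Z_peval q p \<in> J q"
proof -
  have q24: "q^2 \<noteq> 1" "q^4 \<noteq> 1" using q(2) by auto
  obtain N where N: "\<And>i k j. vec_of q x i k j \<noteq> 0 \<Longrightarrow> i < N"
    using vec_of_first_index_bounded[of q x] by blast
  define p where "p = (\<Sum>n<N. monom (vec_of q x n n (2 * n) / zpow_coeff q n) n)"
  have coeff_p: "coeff p n = (if n < N then vec_of q x n n (2 * n) / zpow_coeff q n else 0)" for n
    by (simp add: p_def coeff_sum coeff_monom)
  have "vec_of q x i k j = vec_of q (Z_peval q p) i k j" for i k j
  proof (cases "k = i \<and> j = 2 * i")
    case True
    then show ?thesis
      using N[of i i "2 * i"] vec_of_Z_power(2)[OF q(1) q24]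
      by (auto simp: vec_of_Z_peval[OF q(1) q24] coeff_p)
  next
    case False
    then show ?thesis
      using vec_of_central_support[OF q c1 c2, of i k j] by (auto simp: vec_of_Z_peval[OF q(1) q24])
  qed
  then have "vec_of q (x - Z_peval q p) = (\<lambda>i k j. 0)"
    by (simp add: vec_of_def act_diff)
  then show ?thesis
    using vec_of_eq_0_iff[OF q(1) q24] by blast
qed

lemma Z_peval_in_J_imp_zero:
  assumes q: "(q::'k::field) \<noteq> 0" "q^2 \<noteq> 1" "q^4 \<noteq> 1" and "Z_peval q p \<in> J q"
  shows "p = 0"
proof (rule poly_eqI)
  fix n
  have "coeff p n * zpow_coeff q n = vec_of q (Z_peval q p) n n (2 * n)"
    by (simp add: vec_of_Z_peval[OF q])
  also have "\<dots> = 0"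
    using assms(4) vec_of_eq_0_iff[OF q, of "Z_peval q p"] by simp
  finally show "coeff p n = coeff 0 n"
    using vec_of_Z_power(2)[OF q] by simp
qed

lemma commutes_mod_J_if_generators:
  assumes E1: "y * E1 - E1 * y \<in> J q" and E2: "y * E2 - E2 * y \<in> J q"
  shows "y * x - x * y \<in> J q"
proof -
  let ?P = "\<lambda>x. y * x - x * y \<in> J q"
  have mult: "?P (a * b)" if "?P a" "?P b" for a b
  proof -
    have "y * (a * b) - a * b * y = (y * a - a * y) * b + a * (y * b - b * y)"
      by (simp add: algebra_simps)
    then show ?thesis using that by (simp add: J_add J_mult_left J_mult_right)
  qed
  have words: "?P (alg_word u)" for u
  proof (induction u)
    case Nil
    then show ?case by (simp add: alg_word_Nil J_zero)
  next
    case (Cons g u)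
    have "?P (alg_word [g])" using E1 E2 by (cases g) (simp_all add: E1_def E2_def)
    from mult[OF this Cons.IH] show ?case by simp
  qed
  show ?thesis
  proof (induction x rule: alg_word_induct)
    case (smult_word c u)
    then show ?case
      using J_smult[OF words, of c u] by (simp add: alg_smult_diff)
  next
    case (add x x')
    have "y * (x + x') - (x + x') * y = (y * x - x * y) + (y * x' - x' * y)"
      by (simp add: algebra_simps)
    with add show ?case by (simp add: J_add)
  qed (simp add: J_zero)
qed

lemma Z_commutes_mod_J:
  assumes "(q::'k::field) \<noteq> 0"
  shows "Z q * x - x * Z q \<in> J q"
proof (rule commutes_mod_J_if_generators)
  show "Z q * E1 - E1 * Z q \<in> J q"
    unfolding Z_E1_commutator[OF assms]
    by (intro J_smult J_diff J_mult_left J_mult_right Serre1_in_J)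
  show "Z q * E2 - E2 * Z q \<in> J q"
    unfolding Z_E2_commutator[OF assms] by (intro J_smult Serre2_in_J)
qed

theorem mainTheorem14:
  fixes q :: "'k::{alg_closed_field, field_char_0}"
  assumes "q \<noteq> 0"
    and "\<forall>n::nat. n > 0 \<longrightarrow> q ^ n \<noteq> 1"
  shows "(\<forall>a\<in>nc_carrier. (zz q \<otimes> a) \<ominus> (a \<otimes> zz q) \<in> Iq q)
    \<and> (\<forall>c\<in>nc_carrier. (\<forall>a\<in>nc_carrier. (c \<otimes> a) \<ominus> (a \<otimes> c) \<in> Iq q)
          \<longrightarrow> (\<exists>p::'k poly. c \<ominus> nc_peval p (zz q) \<in> Iq q))
    \<and> (\<forall>p::'k poly. nc_peval p (zz q) \<in> Iq q \<longrightarrow> p = 0)"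
proof (intro conjI ballI allI impI)
  fix a :: "'k nc" assume "a \<in> nc_carrier"
  then have "(zz q \<otimes> a) \<ominus> (a \<otimes> zz q)
      = word_coeff (Z q * Abs_free_alg a - Abs_free_alg a * Z q)"
    by (simp add: word_coeff_ops word_coeff_generators Abs_free_alg_inverse)
  with Z_commutes_mod_J[OF assms(1)] show "(zz q \<otimes> a) \<ominus> (a \<otimes> zz q) \<in> Iq q"
    by (simp add: J_def)
next
  fix c :: "'k nc"
  assume c: "c \<in> nc_carrier" and central: "\<forall>a\<in>nc_carrier. (c \<otimes> a) \<ominus> (a \<otimes> c) \<in> Iq q"
  have "Abs_free_alg c * E - E * Abs_free_alg c \<in> J q" if "E \<in> {E1, E2}" for E
    using central word_coeff[of E] c by (simp add: J_def word_coeff_ops Abs_free_alg_inverse)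
  then obtain p where "Abs_free_alg c - Z_peval q p \<in> J q"
    using central_mod_J_imp_Z_peval[OF assms] by blast
  with c show "\<exists>p. c \<ominus> nc_peval p (zz q) \<in> Iq q"
    by (auto simp: J_def word_coeff_ops word_coeff_Z_peval Abs_free_alg_inverse)
next
  fix p :: "'k poly" assume "nc_peval p (zz q) \<in> Iq q"
  with assms show "p = 0"
    using Z_peval_in_J_imp_zero[of q p] by (simp add: J_def word_coeff_Z_peval)
qed

end
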